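(* Let $\mathcal{P}=(\{\mathcal{E}_k:k\in K\},\{M_0,M_1\})$ be a concurrent quantum program with $K=\{1,\dots,m\}$ on a Hilbert space $\mathcal{H}$ of finite dimension $d$, with initial density operator $\rho_0$. Let $\mathcal{G}=\sum_{i=0}^{d-1}\big(\sum_{k=1}^m\mathcal{F}_k\big)^i$ and, for each permutation $p=p_1p_2\cdots p_m\in P_K$, let $\mathcal{F}_p'=\mathcal{F}_{p_m}\circ\mathcal{G}\circ\mathcal{F}_{p_{m-1}}\circ\cdots\circ\mathcal{F}_{p_2}\circ\mathcal{G}\circ\mathcal{F}_{p_1}$. Let $M$ be the matrix representation of $\sum_{p\in P_K}\mathcal{F}'_p$. Then $\mathcal{P}$ with input $\rho_0$ terminates in the fair schedule $F$ if and only if $M^d(\rho_0\otimes I)|\Phi\rangle=0$, equivalently iff $\big(\sum_{p\in P_K}\mathcal{F}'_p\big)^d(\rho_0)=0$.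
   Context: $\mathcal{H}$ is a complex Hilbert space of finite dimension $d\ge1$ with orthonormal basis $\{|j\rangle\}$, and $|\Phi\rangle=\sum_j|j\rangle|j\rangle$. A super-operator is a completely positive trace-non-increasing linear map on operators on $\mathcal{H}$, with Kraus form $\mathcal{E}(\rho)=\sum_iE_i\rho E_i^\dagger$; its matrix representation is $\sum_iE_i\otimes E_i^*$ ($E^*$ entrywise complex conjugate), and for any CP linear map written in Kraus form the same definition applies. A concurrent quantum program is $\mathcal{P}=(\{\mathcal{E}_k:k\in K\},\{M_0,M_1\})$ with trace-preserving super-operators $\mathcal{E}_k$ and $M_0^\dagger M_0+M_1^\dagger M_1=I$. $\mathcal{F}_k(\rho)=\mathcal{E}_k(M_1\rho M_1^\dagger)$; for a finite string $f=s_1\cdots s_n$, $\mathcal{F}_f=\mathcal{F}_{s_n}\circ\cdots\circ\mathcal{F}_{s_1}$; powers denote iterated composition, the $0$th power the identity. For $s\in K^\omega$, $s[n]$ is its length-$n$ prefix. $\mathcal{P}$ with input $\rho_0$ terminates in a schedule $A\subseteq K^\omega$ if for every $s\in A$ there is $n\ge1$ with $\mathcal{F}_{s[n]}(\rho_0)=0$. $F$ is the set of infinite paths in which every $k\in K$ occurs infinitely often. $P_K$ is the set of permutations of $K$ as strings of length $m$. *)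

theory Defs
  imports "HOL-Analysis.Analysis"
begin

text \<open>Operators on the d-dimensional Hilbert space H are complex matrices indexed by a
  finite type 'n, so d = CARD('n).\<close>

type_synonym 'n op = "complex ^'n ^'n"

definition adj :: "'n::finite op \<Rightarrow> 'n op" where
  "adj A = (\<chi> i j. cnj (A $ j $ i))"

definition conj_mat :: "'n::finite op \<Rightarrow> 'n op" where
  "conj_mat A = (\<chi> i j. cnj (A $ i $ j))"

definition mtrace :: "'n::finite op \<Rightarrow> complex" where
  "mtrace A = (\<Sum>i\<in>UNIV. A $ i $ i)"

definition density_op :: "'n::finite op \<Rightarrow> bool" where
  "density_op \<rho> \<longleftrightarrow>
     (\<forall>v::complex^'n. \<exists>r::real. r \<ge> 0 \<and>
        (\<Sum>i\<in>UNIV. \<Sum>j\<in>UNIV. cnj (v $ i) * \<rho> $ i $ j * v $ j) = complex_of_real r)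
     \<and> mtrace \<rho> = 1"

definition kron :: "'n::finite op \<Rightarrow> 'n op \<Rightarrow> complex ^('n \<times> 'n) ^('n \<times> 'n)" where
  "kron A B = (\<chi> ij kl. A $ fst ij $ fst kl * B $ snd ij $ snd kl)"

definition Phi :: "complex ^('n::finite \<times> 'n)" where
  "Phi = (\<chi> ij. if fst ij = snd ij then 1 else 0)"

primrec matpow :: "'m::finite op \<Rightarrow> nat \<Rightarrow> 'm op" where
  "matpow A 0 = mat 1"
| "matpow A (Suc n) = A ** matpow A n"

text \<open>Super-operators in Kraus form (list of Kraus operators).\<close>
definition apply_kraus :: "'n::finite op list \<Rightarrow> 'n op \<Rightarrow> 'n op" where
  "apply_kraus L \<rho> = sum_list (map (\<lambda>E. E ** \<rho> ** adj E) L)"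

definition trace_preserving :: "'n::finite op list \<Rightarrow> bool" where
  "trace_preserving L \<longleftrightarrow> sum_list (map (\<lambda>E. adj E ** E) L) = mat 1"

definition matrep :: "'n::finite op list \<Rightarrow> complex ^('n \<times> 'n) ^('n \<times> 'n)" where
  "matrep L = sum_list (map (\<lambda>E. kron E (conj_mat E)) L)"

text \<open>Kraus form of composition (A after B), and of sums (concatenation).\<close>
definition kraus_comp :: "'n::finite op list \<Rightarrow> 'n op list \<Rightarrow> 'n op list" where
  "kraus_comp A B = concat (map (\<lambda>b. map (\<lambda>a. a ** b) A) B)"

primrec kraus_pow :: "'n::finite op list \<Rightarrow> nat \<Rightarrow> 'n op list" where
  "kraus_pow A 0 = [mat 1]"
| "kraus_pow A (Suc n) = kraus_comp A (kraus_pow A n)"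

text \<open>Process set K = {1..m}; Es k = Kraus operators of E_k; M1 the measurement
  operator for continuing the loop.\<close>

definition Fk :: "(nat \<Rightarrow> 'n::finite op list) \<Rightarrow> 'n op \<Rightarrow> nat \<Rightarrow> 'n op \<Rightarrow> 'n op" where
  "Fk Es M1 k \<rho> = apply_kraus (Es k) (M1 ** \<rho> ** adj M1)"

primrec Fpath :: "(nat \<Rightarrow> 'n::finite op list) \<Rightarrow> 'n op \<Rightarrow> (nat \<Rightarrow> nat) \<Rightarrow> nat \<Rightarrow> 'n op \<Rightarrow> 'n op" where
  "Fpath Es M1 s 0 = id"
| "Fpath Es M1 s (Suc n) = Fk Es M1 (s n) \<circ> Fpath Es M1 s n"

definition terminates_in :: "(nat \<Rightarrow> 'n::finite op list) \<Rightarrow> 'n op \<Rightarrow> 'n op \<Rightarrow> (nat \<Rightarrow> nat) set \<Rightarrow> bool" where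
  "terminates_in Es M1 \<rho>0 A \<longleftrightarrow> (\<forall>s\<in>A. \<exists>n\<ge>1. Fpath Es M1 s n \<rho>0 = 0)"

definition fair_paths :: "nat set \<Rightarrow> (nat \<Rightarrow> nat) set" where
  "fair_paths K = {s. (\<forall>n. s n \<in> K) \<and> (\<forall>k\<in>K. infinite {n. s n = k})}"

definition perms :: "nat set \<Rightarrow> nat list set" where
  "perms K = {p. distinct p \<and> set p = K}"

definition Gop :: "(nat \<Rightarrow> 'n::finite op list) \<Rightarrow> 'n op \<Rightarrow> nat set \<Rightarrow> 'n op \<Rightarrow> 'n op" where
  "Gop Es M1 K \<rho> = (\<Sum>i<CARD('n). ((\<lambda>\<sigma>. \<Sum>k\<in>K. Fk Es M1 k \<sigma>) ^^ i) \<rho>)"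

fun Fprime :: "(nat \<Rightarrow> 'n::finite op list) \<Rightarrow> 'n op \<Rightarrow> nat set \<Rightarrow> nat list \<Rightarrow> 'n op \<Rightarrow> 'n op" where
  "Fprime Es M1 K [] = id"
| "Fprime Es M1 K [x] = Fk Es M1 x"
| "Fprime Es M1 K (x # y # r) = Fprime Es M1 K (y # r) \<circ> Gop Es M1 K \<circ> Fk Es M1 x"

definition SumFprime :: "(nat \<Rightarrow> 'n::finite op list) \<Rightarrow> 'n op \<Rightarrow> nat set \<Rightarrow> 'n op \<Rightarrow> 'n op" where
  "SumFprime Es M1 K \<rho> = (\<Sum>p\<in>perms K. Fprime Es M1 K p \<rho>)"

definition kraus_F :: "(nat \<Rightarrow> 'n::finite op list) \<Rightarrow> 'n op \<Rightarrow> nat \<Rightarrow> 'n op list" where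
  "kraus_F Es M1 k = map (\<lambda>E. E ** M1) (Es k)"

definition kraus_G :: "(nat \<Rightarrow> 'n::finite op list) \<Rightarrow> 'n op \<Rightarrow> nat list \<Rightarrow> 'n op list" where
  "kraus_G Es M1 ks = concat (map (\<lambda>i. kraus_pow (concat (map (kraus_F Es M1) ks)) i) [0..<CARD('n)])"

fun kraus_Fprime :: "(nat \<Rightarrow> 'n::finite op list) \<Rightarrow> 'n op \<Rightarrow> nat list \<Rightarrow> nat list \<Rightarrow> 'n op list" where
  "kraus_Fprime Es M1 ks [] = [mat 1]"
| "kraus_Fprime Es M1 ks [x] = kraus_F Es M1 x"
| "kraus_Fprime Es M1 ks (x # y # r) =
     kraus_comp (kraus_Fprime Es M1 ks (y # r)) (kraus_comp (kraus_G Es M1 ks) (kraus_F Es M1 x))"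

text \<open>Matrix representation of \<Sum>_{p\<in>P_K} F'_p (Kraus form = concatenation of the
  Kraus forms of the summands, so the representation is the sum).\<close>
definition Mrep :: "(nat \<Rightarrow> 'n::finite op list) \<Rightarrow> 'n op \<Rightarrow> nat \<Rightarrow> complex ^('n \<times> 'n) ^('n \<times> 'n)" where
  "Mrep Es M1 m = (\<Sum>p\<in>perms {1..m}. matrep (kraus_Fprime Es M1 [1..<m+1] p))"

end

theory Submission
  imports Defs
begin

(* For a positive semidefinite operator X let qnull X = {v. <v, X v> = 0}; it is the kernel
   of X, i.e. the orthogonal complement of its support.  On positive operators qnull turns
   sums into intersections, is UNIV only for X = 0, and is transported by every map with a
   Kraus form (a CP map): qnull X \<subseteq> qnull Y implies qnull (f X) \<subseteq> qnull (f Y).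
   Since a decreasing chain of subspaces of C^d stabilises within d steps, we get two
   finite-dimensional facts for a CP map f and a positive \<sigma>:
     (i)  the support of \<sigma> + f \<sigma> + ... + f^(d-1) \<sigma> contains that of every f^n \<sigma>;
     (ii) if f^n \<sigma> = 0 for some n, then already f^d \<sigma> = 0.
   Let E = \<Sum>_p F'_p.  By (i), G absorbs repeated processes, so the support of E \<sigma> contains
   that of F_w \<sigma> for every word w that visits all processes and ends with a new one (compare
   with the term of E for the permutation of first occurrences of w).  Every fair path is a
   concatenation of such words, so E^d \<rho>0 = 0 forces termination.  Conversely, if E^d \<rho>0 \<noteq> 0,
   then E^n \<rho>0 \<noteq> 0 for all n by (ii), and every nonzero contribution of E can be traced back
   to a word visiting all processes; a scheduler chaining such words yields a fair path along
   which the state never vanishes.  Finally, the matrix representation M acts on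
   vectorised operators as E does, and (\<rho>0 \<otimes> I)|\<Phi>> is the vectorisation of \<rho>0.
   The sections follow this outline: positive operators, Kraus maps, the program's maps,
   stabilisation, the two directions of the criterion, the matrix form, the theorem. *)

section \<open>Positive operators and their null spaces\<close>

definition cinner :: "complex^'n::finite \<Rightarrow> complex^'n \<Rightarrow> complex" where
  "cinner u w = (\<Sum>i\<in>UNIV. cnj (u$i) * w$i)"

definition qf :: "'n::finite op \<Rightarrow> complex^'n \<Rightarrow> complex" where
  "qf X v = cinner v (X *v v)"

definition psd :: "'n::finite op \<Rightarrow> bool" where
  "psd X \<longleftrightarrow> (\<forall>v. Im (qf X v) = 0 \<and> Re (qf X v) \<ge> 0)"

definition qnull :: "'n::finite op \<Rightarrow> (complex^'n) set" where
  "qnull X = {v. qf X v = 0}"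

lemma cinner_adj: "cinner u (A *v w) = cinner (adj A *v u) w"
proof -
  have "cinner u (A *v w) = (\<Sum>i\<in>UNIV. \<Sum>j\<in>UNIV. cnj (u$i) * (A$i$j * w$j))"
    by (simp add: cinner_def matrix_vector_mult_def sum_distrib_left)
  also have "\<dots> = (\<Sum>j\<in>UNIV. \<Sum>i\<in>UNIV. cnj (u$i) * (A$i$j * w$j))"
    by (rule sum.swap)
  also have "\<dots> = cinner (adj A *v u) w"
    by (simp add: cinner_def matrix_vector_mult_def adj_def sum_distrib_right sum_distrib_left mult_ac)
  finally show ?thesis .
qed

lemma cinner_axis: "cinner (axis i 1) y = y $ i"
proof -
  have "cinner (axis i 1) y = (\<Sum>j\<in>UNIV. if j = i then y$j else 0)"
    unfolding cinner_def axis_def by (rule sum.cong) auto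
  then show ?thesis by simp
qed

lemma qf_add: "qf (X + Y) v = qf X v + qf Y v"
  by (simp add: qf_def cinner_def matrix_vector_mult_add_rdistrib distrib_left sum.distrib)

lemma qf_congr: "qf (E ** X ** adj E) v = qf X (adj E *v v)"
  by (simp add: qf_def matrix_vector_mul_assoc[symmetric] cinner_adj)

lemma qf_expand:
  "qf X (v + c *s w) = qf X v + c * cinner v (X *v w) + cnj c * cinner w (X *v v)
      + cnj c * c * qf X w"
proof -
  have "X *v (v + c *s w) = X *v v + c *s (X *v w)"
    by (simp add: matrix_vector_right_distrib vector_scalar_commute)
  then show ?thesis
    by (simp add: qf_def cinner_def distrib_left distrib_right sum.distrib sum_distrib_left
        mult_ac)
qed

lemma nonneg_quadratic_linear_term:
  fixes c q :: real
  assumes q: "q \<ge> 0" and nonneg: "\<And>t. t * c + t^2 * q \<ge> 0"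
  shows "c = 0"
proof -
  define t where "t = - c / (q + 1)"
  have tq: "t * (q + 1) = - c" using q by (simp add: t_def)
  have "t * c + t^2 * q = t * (c + t * (q + 1)) - t^2"
    by (simp add: algebra_simps power2_eq_square)
  also have "\<dots> = - (t^2)" using tq by (simp add: mult.commute)
  finally have "t = 0" using nonneg[of t] by simp
  then show ?thesis using tq by simp
qed

lemma psd_cross_terms_vanish:
  assumes X: "psd X" and v: "qf X v = 0"
  shows "c * cinner v (X *v w) + cnj c * cinner w (X *v v) = 0"
proof -
  define z where "z = c * cinner v (X *v w) + cnj c * cinner w (X *v v)"
  define q where "q = cnj c * c * qf X w"
  have line: "qf X (v + (of_real t * c) *s w) = of_real t * z + of_real (t^2) * q" for t
    using qf_expand[of X v "of_real t * c" w] v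
    by (simp add: z_def q_def algebra_simps power2_eq_square)
  have "q = of_real ((cmod c)\<^sup>2) * qf X w"
    by (simp only: q_def complex_norm_square) (simp add: mult.commute)
  then have q_real: "Im q = 0" and q_nonneg: "Re q \<ge> 0"
    using X unfolding psd_def by auto
  have "Im (qf X (v + (of_real 1 * c) *s w)) = 0" using X unfolding psd_def by blast
  then have "Im z = 0" using q_real by (simp only: line) simp
  moreover have "Re z = 0"
  proof (rule nonneg_quadratic_linear_term[OF q_nonneg])
    fix t :: real
    have "Re (qf X (v + (of_real t * c) *s w)) \<ge> 0" using X unfolding psd_def by blast
    then show "t * Re z + t^2 * Re q \<ge> 0" using q_real by (simp add: line)
  qed
  ultimately show ?thesis by (simp add: z_def complex_eq_iff)
qed

lemma psd_isotropic_kernel: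
  assumes X: "psd X" and v: "qf X v = 0"
  shows "X *v v = 0"
proof -
  have "cinner w (X *v v) = 0" for w
    using psd_cross_terms_vanish[OF X v, of 1 w] psd_cross_terms_vanish[OF X v, of \<i> w]
    by (simp add: algebra_simps complex_eq_iff)
  then show ?thesis
    unfolding vec_eq_iff by (metis cinner_axis zero_index)
qed

lemma qnull_kernel: "psd X \<Longrightarrow> qnull X = {v. X *v v = 0}"
  unfolding qnull_def using psd_isotropic_kernel by (auto simp: qf_def cinner_def)

lemma qnull_subspace: "psd X \<Longrightarrow> vec.subspace (qnull X)"
  by (simp add: qnull_kernel vec.subspace_kernel)

lemma qnull_UNIV_iff: "psd X \<Longrightarrow> qnull X = UNIV \<longleftrightarrow> X = 0"
proof
  assume X: "psd X" and "qnull X = UNIV"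
  then have "X *v axis j 1 = 0" for j by (auto simp: qnull_kernel)
  then show "X = 0"
    by (simp add: vec_eq_iff matrix_vector_mult_def axis_def if_distrib cong: if_cong)
qed (simp add: qnull_def qf_def cinner_def)

lemma dim_qnull_less:
  fixes X :: "'n::finite op"
  assumes X: "psd X" "X \<noteq> 0"
  shows "vec.dim (qnull X) < CARD('n)"
proof (rule ccontr)
  assume "\<not> vec.dim (qnull X) < CARD('n)"
  moreover have "vec.dim (UNIV :: (complex^'n) set) = CARD('n)" by (rule vec_dim_card)
  ultimately have "vec.dim (UNIV :: (complex^'n) set) \<le> vec.dim (qnull X)" by linarith
  then have "qnull X = UNIV"
    by (intro vec.subspace_dim_equal qnull_subspace X vec.subspace_UNIV) auto
  with X qnull_UNIV_iff show False by blast
qed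

lemma psd_zero [simp]: "psd 0"
  by (simp add: psd_def qf_def cinner_def)

lemma qnull_zero [simp]: "qnull 0 = UNIV"
  by (simp add: qnull_def qf_def cinner_def)

lemma psd_add: "psd X \<Longrightarrow> psd Y \<Longrightarrow> psd (X + Y)"
  by (simp add: psd_def qf_add)

lemma psd_sum: "(\<And>x. x \<in> S \<Longrightarrow> psd (f x)) \<Longrightarrow> psd (sum f S)"
  by (induction S rule: infinite_finite_induct) (auto intro: psd_add)

lemma psd_sum_list: "(\<And>x. x \<in> set L \<Longrightarrow> psd (f x)) \<Longrightarrow> psd (sum_list (map f L))"
  by (induction L) (auto intro: psd_add)

lemma psd_congr: "psd X \<Longrightarrow> psd (E ** X ** adj E)"
  by (simp add: psd_def qf_congr)

lemma qnull_add: "psd X \<Longrightarrow> psd Y \<Longrightarrow> qnull (X + Y) = qnull X \<inter> qnull Y"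
  unfolding qnull_def psd_def by (auto simp: qf_add complex_eq_iff) (smt (verit))+

lemma qnull_sum:
  "finite S \<Longrightarrow> (\<And>x. x \<in> S \<Longrightarrow> psd (f x)) \<Longrightarrow> qnull (sum f S) = (\<Inter>x\<in>S. qnull (f x))"
proof (induction S rule: finite_induct)
  case (insert x F) then show ?case by (simp add: qnull_add psd_sum)
qed simp

lemma qnull_sum_list:
  "(\<And>x. x \<in> set L \<Longrightarrow> psd (f x)) \<Longrightarrow> qnull (sum_list (map f L)) = (\<Inter>x\<in>set L. qnull (f x))"
proof (induction L)
  case (Cons a L) then show ?case by (simp add: qnull_add psd_sum_list)
qed simp

lemma qnull_congr: "qnull (E ** X ** adj E) = {v. adj E *v v \<in> qnull X}"
  by (simp add: qnull_def qf_congr)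

lemma density_psd: "density_op \<rho> \<Longrightarrow> psd \<rho>"
proof -
  assume d: "density_op \<rho>"
  have qf_expl: "qf \<rho> v = (\<Sum>i\<in>UNIV. \<Sum>j\<in>UNIV. cnj (v $ i) * \<rho> $ i $ j * v $ j)" for v
    by (simp add: qf_def cinner_def matrix_vector_mult_def sum_distrib_left mult.assoc)
  show ?thesis unfolding psd_def
  proof
    fix v
    obtain r where "r \<ge> 0" "(\<Sum>i\<in>UNIV. \<Sum>j\<in>UNIV. cnj (v $ i) * \<rho> $ i $ j * v $ j) = of_real r"
      using d unfolding density_op_def by blast
    then show "Im (qf \<rho> v) = 0 \<and> Re (qf \<rho> v) \<ge> 0" by (simp add: qf_expl)
  qed
qed

section \<open>Maps in Kraus form\<close>

lemma matrix_add_rdistrib: "(B + C) ** A = B ** A + C ** (A :: 'a::semiring_1^'n::finite^'m::finite)"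
  by (simp add: matrix_matrix_mult_def vec_eq_iff distrib_right sum.distrib)

lemma adj_mat1 [simp]: "adj (mat 1) = mat 1"
  by (simp add: adj_def mat_def vec_eq_iff)

lemma adj_mult: "adj (A ** B) = adj B ** adj A"
  by (simp add: adj_def matrix_matrix_mult_def vec_eq_iff mult.commute)

lemma apply_kraus_id [simp]: "apply_kraus [mat 1] X = X"
  by (simp add: apply_kraus_def)

lemma apply_kraus_append: "apply_kraus (A @ B) X = apply_kraus A X + apply_kraus B X"
  by (simp add: apply_kraus_def)

lemma apply_kraus_concat: "apply_kraus (concat Ls) X = (\<Sum>L\<leftarrow>Ls. apply_kraus L X)"
  by (induction Ls) (auto simp: apply_kraus_append apply_kraus_def)

lemma apply_kraus_add: "apply_kraus L (X + Y) = apply_kraus L X + apply_kraus L Y"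
  by (induction L) (auto simp: apply_kraus_def matrix_add_ldistrib matrix_add_rdistrib)

lemma apply_kraus_zero [simp]: "apply_kraus L 0 = 0"
  by (induction L) (auto simp: apply_kraus_def)

lemma apply_kraus_sum_list: "apply_kraus L (\<Sum>x\<leftarrow>xs. f x) = (\<Sum>x\<leftarrow>xs. apply_kraus L (f x))"
  by (induction xs) (auto simp: apply_kraus_add)

lemma apply_kraus_comp: "apply_kraus (kraus_comp A B) X = apply_kraus A (apply_kraus B X)"
proof -
  have "apply_kraus (kraus_comp A B) X = (\<Sum>b\<leftarrow>B. apply_kraus A (b ** X ** adj b))"
    unfolding kraus_comp_def apply_kraus_concat
    by (simp add: apply_kraus_def o_def adj_mult matrix_mul_assoc)
  also have "\<dots> = apply_kraus A (apply_kraus B X)"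
    by (simp add: apply_kraus_def[of B] apply_kraus_sum_list)
  finally show ?thesis .
qed

lemma apply_kraus_pow: "apply_kraus (kraus_pow A i) = apply_kraus A ^^ i"
  by (induction i) (auto simp: fun_eq_iff apply_kraus_comp)

lemma apply_kraus_psd: "psd X \<Longrightarrow> psd (apply_kraus L X)"
  unfolding apply_kraus_def by (rule psd_sum_list) (simp add: psd_congr)

lemma qnull_apply_kraus:
  "psd X \<Longrightarrow> qnull (apply_kraus L X) = {v. \<forall>E\<in>set L. adj E *v v \<in> qnull X}"
  unfolding apply_kraus_def by (subst qnull_sum_list) (auto simp: psd_congr qnull_congr)

definition cp :: "('n::finite op \<Rightarrow> 'n op) \<Rightarrow> bool" where
  "cp f \<longleftrightarrow> (\<exists>L. f = apply_kraus L)"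

lemma cp_id: "cp id"
  unfolding cp_def by (rule exI[of _ "[mat 1]"]) auto

lemma cp_comp: "cp f \<Longrightarrow> cp g \<Longrightarrow> cp (f \<circ> g)"
  unfolding cp_def by (metis apply_kraus_comp comp_apply ext)

lemma cp_sum: "(\<And>i. i \<in> S \<Longrightarrow> cp (f i)) \<Longrightarrow> cp (\<lambda>X. \<Sum>i\<in>S. f i X)"
proof (induction S rule: infinite_finite_induct)
  case (insert x F)
  then obtain L1 L2 where "f x = apply_kraus L1" "(\<lambda>X. \<Sum>i\<in>F. f i X) = apply_kraus L2"
    unfolding cp_def by blast
  then have "(\<lambda>X. \<Sum>i\<in>insert x F. f i X) = apply_kraus (L1 @ L2)"
    using insert.hyps by (simp add: fun_eq_iff apply_kraus_append)
  then show ?case unfolding cp_def by blast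
qed (auto simp: cp_def apply_kraus_def fun_eq_iff intro!: exI[of _ "[]"])

lemma cp_pow: "cp f \<Longrightarrow> cp (f ^^ n)"
  by (induction n) (auto simp: cp_id cp_comp)

lemma cp_add: "cp f \<Longrightarrow> f (X + Y) = f X + f Y"
  unfolding cp_def by (auto simp: apply_kraus_add)

lemma cp_zero: "cp f \<Longrightarrow> f 0 = 0"
  unfolding cp_def by auto

lemma cp_sum_apply: "cp f \<Longrightarrow> f (\<Sum>i\<in>S. g i) = (\<Sum>i\<in>S. f (g i))"
  by (induction S rule: infinite_finite_induct) (auto simp: cp_add cp_zero)

lemma cp_psd: "cp f \<Longrightarrow> psd X \<Longrightarrow> psd (f X)"
  unfolding cp_def by (auto simp: apply_kraus_psd)

lemma psd_pow: "cp f \<Longrightarrow> psd X \<Longrightarrow> psd ((f ^^ n) X)"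
  by (induction n) (auto simp: cp_psd)

lemma cp_qnull_mono:
  "cp f \<Longrightarrow> psd X \<Longrightarrow> psd Y \<Longrightarrow> qnull X \<subseteq> qnull Y \<Longrightarrow> qnull (f X) \<subseteq> qnull (f Y)"
  unfolding cp_def by (auto simp: qnull_apply_kraus; blast)

section \<open>The maps of the concurrent program\<close>

definition Fsum :: "(nat \<Rightarrow> 'n::finite op list) \<Rightarrow> 'n op \<Rightarrow> nat set \<Rightarrow> 'n op \<Rightarrow> 'n op" where
  "Fsum Es M1 K = (\<lambda>\<sigma>. \<Sum>k\<in>K. Fk Es M1 k \<sigma>)"

lemma Gop_Fsum: "Gop Es M1 K = (\<lambda>\<sigma>. \<Sum>i<CARD('n). (Fsum Es M1 K ^^ i) \<sigma>)"
  for Es :: "nat \<Rightarrow> 'n::finite op list"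
  unfolding Gop_def Fsum_def by simp

fun Fw :: "(nat \<Rightarrow> 'n::finite op list) \<Rightarrow> 'n op \<Rightarrow> nat list \<Rightarrow> 'n op \<Rightarrow> 'n op" where
  "Fw Es M1 [] = id"
| "Fw Es M1 (x # w) = Fw Es M1 w \<circ> Fk Es M1 x"

lemma Fw_append: "Fw Es M1 (u @ v) = Fw Es M1 v \<circ> Fw Es M1 u"
  by (induction u) auto

lemma Fpath_Fw: "Fpath Es M1 s n = Fw Es M1 (map s [0..<n])"
  by (induction n) (auto simp: Fw_append)

lemma Fpath_shift: "Fpath Es M1 s (a + b) = Fpath Es M1 (\<lambda>i. s (a + i)) b \<circ> Fpath Es M1 s a"
  by (induction b) auto

lemma Fprime_snoc:
  "q \<noteq> [] \<Longrightarrow> Fprime Es M1 K (q @ [x]) = Fk Es M1 x \<circ> Gop Es M1 K \<circ> Fprime Es M1 K q"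
  by (induction q rule: induct_list012) (auto simp: o_assoc)

lemma apply_kraus_F: "apply_kraus (kraus_F Es M1 k) = Fk Es M1 k"
  by (simp add: fun_eq_iff kraus_F_def Fk_def apply_kraus_def o_def adj_mult matrix_mul_assoc)

lemma apply_kraus_G:
  fixes Es :: "nat \<Rightarrow> 'n::finite op list"
  assumes "distinct ks"
  shows "apply_kraus (kraus_G Es M1 ks) = Gop Es M1 (set ks)"
proof -
  have F: "apply_kraus (concat (map (kraus_F Es M1) ks)) = Fsum Es M1 (set ks)"
    using assms by (simp add: fun_eq_iff apply_kraus_concat o_def apply_kraus_F Fsum_def
        sum_list_distinct_conv_sum_set)
  have "apply_kraus (kraus_G Es M1 ks)
      = (\<lambda>X. \<Sum>i\<leftarrow>[0..<CARD('n)]. (apply_kraus (concat (map (kraus_F Es M1) ks)) ^^ i) X)"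
    by (simp add: fun_eq_iff kraus_G_def apply_kraus_concat o_def apply_kraus_pow)
  then show ?thesis
    by (simp only: F Gop_Fsum interv_sum_list_conv_sum_set_nat lessThan_atLeast0 set_upt)
qed

lemma apply_kraus_Fprime:
  "distinct ks \<Longrightarrow> apply_kraus (kraus_Fprime Es M1 ks p) = Fprime Es M1 (set ks) p"
  by (induction Es M1 ks p rule: kraus_Fprime.induct)
     (auto simp: fun_eq_iff apply_kraus_comp apply_kraus_G apply_kraus_F)

lemma cp_Fk: "cp (Fk Es M1 k)"
  unfolding cp_def by (metis apply_kraus_F)

lemma cp_Fsum: "cp (Fsum Es M1 K)"
  unfolding Fsum_def by (rule cp_sum) (rule cp_Fk)

lemma cp_Gop: "cp (Gop Es M1 K)"
  unfolding Gop_Fsum by (simp add: cp_sum cp_pow cp_Fsum)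

lemma cp_Fprime: "cp (Fprime Es M1 K p)"
proof (induction Es M1 K p rule: Fprime.induct)
  case (3 Es M1 K x y r)
  then have "cp (Fprime Es M1 K (y # r))" by blast
  then show ?case by (simp only: Fprime.simps cp_comp cp_Gop cp_Fk)
qed (simp_all only: Fprime.simps cp_id cp_Fk)

lemma cp_SumFprime: "cp (SumFprime Es M1 K)"
  unfolding SumFprime_def by (simp add: cp_sum cp_Fprime)

lemma cp_Fw: "cp (Fw Es M1 w)"
  by (induction w) (simp_all only: Fw.simps cp_id cp_Fk cp_comp)

lemma cp_Fpath: "cp (Fpath Es M1 s n)"
  by (simp add: Fpath_Fw cp_Fw)

section \<open>Stabilisation in finite dimension\<close>

lemma strict_subspace_chain_dim:
  fixes V :: "nat \<Rightarrow> (complex^'n::finite) set"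
  assumes sub: "\<And>j. vec.subspace (V j)" and decr: "decseq V"
    and strict: "\<forall>j<n. V j \<noteq> V (Suc j)"
  shows "vec.dim (V n) + n \<le> vec.dim (V 0)"
  using strict
proof (induction n)
  case (Suc n)
  have "vec.dim (V (Suc n)) < vec.dim (V n)"
  proof (rule ccontr)
    assume "\<not> vec.dim (V (Suc n)) < vec.dim (V n)"
    then have "V (Suc n) = V n"
      using decr by (intro vec.subspace_dim_equal sub) (auto simp: decseq_Suc_iff)
    with Suc.prems show False by (metis lessI)
  qed
  with Suc show ?case by simp
qed simp

lemma subspace_chain_stabilises:
  fixes V :: "nat \<Rightarrow> (complex^'n::finite) set"
  assumes sub: "\<And>j. vec.subspace (V j)" and decr: "decseq V"
    and persist: "\<And>j. V j = V (Suc j) \<Longrightarrow> V (Suc j) = V (Suc (Suc j))"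
    and n: "vec.dim (V 0) \<le> n"
  shows "V n = V (vec.dim (V 0))"
proof -
  let ?N = "vec.dim (V 0)"
  have const_from: "V (j + k) = V j" if "V j = V (Suc j)" for j k
  proof -
    have "V (j + i) = V (Suc (j + i))" for i
      by (induction i) (use that persist in auto)
    then show ?thesis by (induction k) auto
  qed
  obtain j where j: "j \<le> ?N" "V j = V (Suc j)"
  proof (rule ccontr)
    assume "\<not> thesis"
    with that have "\<forall>j<Suc ?N. V j \<noteq> V (Suc j)" by (meson less_Suc_eq_le)
    from strict_subspace_chain_dim[OF sub decr this] show False by simp
  qed
  show ?thesis
    using const_from[OF j(2), of "n - j"] const_from[OF j(2), of "?N - j"] j(1) n by simp
qed

text \<open>The null spaces W k of the partial sums S k decrease, and W (k+1) =
  qnull \<sigma> \<inter> qnull (f (S k)) depends only on W k, so the chain stabilises.\<close>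
lemma qnull_orbit_sum:
  fixes \<sigma> :: "'n::finite op"
  assumes f: "cp f" and \<sigma>: "psd \<sigma>"
  shows "qnull (\<Sum>i<CARD('n). (f ^^ i) \<sigma>) \<subseteq> qnull ((f ^^ n) \<sigma>)"
proof (cases "\<sigma> = 0")
  case True then show ?thesis by (simp add: cp_zero cp_pow f)
next
  case False
  define S where "S k = (\<Sum>i<k. (f ^^ i) \<sigma>)" for k
  define W where "W k = qnull (S k)" for k
  have psd_S: "psd (S k)" for k unfolding S_def by (rule psd_sum) (simp add: psd_pow f \<sigma>)
  have S_Suc: "S (Suc k) = \<sigma> + f (S k)" for k
    unfolding S_def sum.lessThan_Suc_shift by (simp add: cp_sum_apply[OF f])
  have W_Suc: "W (Suc k) = qnull \<sigma> \<inter> qnull (f (S k))" for k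
    unfolding W_def S_Suc by (simp add: qnull_add \<sigma> cp_psd f psd_S)
  have W_decr: "W (Suc k) \<subseteq> W k" for k
    unfolding W_def S_def by (subst qnull_sum; auto simp: psd_pow f \<sigma>)+
  define V where "V j = W (Suc j)" for j
  have V_persist: "V (Suc j) = V (Suc (Suc j))" if "V j = V (Suc j)" for j
  proof -
    have "qnull (f (S (Suc j))) = qnull (f (S (Suc (Suc j))))"
      using that cp_qnull_mono[OF f psd_S psd_S] unfolding V_def W_def
      by (metis subset_antisym order_refl)
    then show ?thesis unfolding V_def W_Suc[of "Suc j"] W_Suc[of "Suc (Suc j)"] by simp
  qed
  have V0: "vec.dim (V 0) < CARD('n)"
    using dim_qnull_less[OF \<sigma> False] by (simp add: V_def W_def S_def)
  have V_decr: "decseq V" by (rule decseq_SucI) (simp add: V_def W_decr)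
  have V_const: "V j = V (vec.dim (V 0))" if "vec.dim (V 0) \<le> j" for j
    by (rule subspace_chain_stabilises[OF _ V_decr V_persist that])
       (simp add: V_def W_def psd_S qnull_subspace)
  define m where "m = max n (CARD('n) - 1)"
  have "W (CARD('n)) = W (Suc m)"
    using V_const[of "CARD('n) - 1"] V_const[of m] V0 by (simp add: V_def m_def)
  also have "\<dots> \<subseteq> qnull ((f ^^ n) \<sigma>)"
    unfolding W_def S_def by (subst qnull_sum) (auto simp: psd_pow f \<sigma> m_def less_Suc_eq_le)
  finally show ?thesis by (simp add: W_def S_def)
qed

text \<open>The subspaces reachable by n adjoint Kraus operators; f^n \<sigma> vanishes exactly when they
  lie in the null space of \<sigma>.\<close>
primrec reach :: "'n::finite op list \<Rightarrow> nat \<Rightarrow> (complex^'n) set" where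
  "reach L 0 = UNIV"
| "reach L (Suc n) = vec.span {adj E *v y | E y. E \<in> set L \<and> y \<in> reach L n}"

lemma reach_subspace: "vec.subspace (reach L n)"
  by (cases n) (auto simp: vec.subspace_UNIV vec.subspace_span)

lemma reach_decseq: "decseq (reach L)"
proof (rule decseq_SucI)
  show "reach L (Suc n) \<subseteq> reach L n" for n
    by (induction n) (auto intro!: vec.span_mono)
qed

lemma apply_kraus_pow_zero_iff:
  "psd \<sigma> \<Longrightarrow> (apply_kraus L ^^ n) \<sigma> = 0 \<longleftrightarrow> reach L n \<subseteq> qnull \<sigma>"
proof (induction n arbitrary: \<sigma>)
  case 0 then show ?case by (simp add: qnull_UNIV_iff[symmetric] top.extremum_unique)
next
  case (Suc n)
  let ?A = "{adj E *v y | E y. E \<in> set L \<and> y \<in> reach L n}"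
  have "(apply_kraus L ^^ Suc n) \<sigma> = (apply_kraus L ^^ n) (apply_kraus L \<sigma>)"
    by (simp only: funpow_Suc_right o_apply)
  then have "(apply_kraus L ^^ Suc n) \<sigma> = 0 \<longleftrightarrow> reach L n \<subseteq> qnull (apply_kraus L \<sigma>)"
    using Suc.IH[OF apply_kraus_psd[OF Suc.prems]] by simp
  also have "\<dots> \<longleftrightarrow> ?A \<subseteq> qnull \<sigma>"
    using Suc.prems by (auto simp: qnull_apply_kraus)
  also have "\<dots> \<longleftrightarrow> vec.span ?A \<subseteq> qnull \<sigma>"
    using vec.span_minimal[OF _ qnull_subspace[OF Suc.prems]] vec.span_superset[of ?A] by blast
  finally show ?case by simp
qed

lemma cp_pow_zero_within_dim:
  fixes \<sigma> :: "'n::finite op"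
  assumes f: "cp f" and \<sigma>: "psd \<sigma>" and zero: "(f ^^ n) \<sigma> = 0"
  shows "(f ^^ CARD('n)) \<sigma> = 0"
proof -
  obtain L where L: "f = apply_kraus L" using f cp_def by blast
  have dim0: "vec.dim (reach L 0) = CARD('n)" by (simp only: reach.simps vec_dim_card)
  have "reach L (CARD('n)) \<subseteq> reach L n"
  proof (cases "CARD('n) \<le> n")
    case True
    have "reach L n = reach L (vec.dim (reach L 0))"
      by (rule subspace_chain_stabilises[OF reach_subspace reach_decseq]) (simp, metis dim0 True)
    then show ?thesis by (simp only: dim0 order_refl)
  next
    case False then show ?thesis by (intro decseqD[OF reach_decseq]) simp
  qed
  also have "\<dots> \<subseteq> qnull \<sigma>" using zero apply_kraus_pow_zero_iff[OF \<sigma>] L by blast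
  finally show ?thesis using apply_kraus_pow_zero_iff[OF \<sigma>] L by blast
qed

section \<open>Termination when (\<Sum>p F'_p)^d annihilates the input\<close>

lemma qnull_Gop_le: "psd \<tau> \<Longrightarrow> qnull (Gop Es M1 K \<tau>) \<subseteq> qnull \<tau>"
  for \<tau> :: "'n::finite op"
proof -
  assume \<tau>: "psd \<tau>"
  have "qnull (Gop Es M1 K \<tau>) = (\<Inter>i<CARD('n). qnull ((Fsum Es M1 K ^^ i) \<tau>))"
    unfolding Gop_Fsum by (rule qnull_sum) (auto simp: psd_pow cp_Fsum \<tau>)
  also have "\<dots> \<subseteq> qnull ((Fsum Es M1 K ^^ 0) \<tau>)"
    using zero_less_card_finite[where 'a='n] by blast
  finally show ?thesis by simp
qed

text \<open>By fact (i), G absorbs one further step of any process.\<close>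
lemma qnull_Gop_absorbs_Fk:
  fixes \<sigma> :: "'n::finite op"
  assumes K: "finite K" "k \<in> K" and \<sigma>: "psd \<sigma>"
  shows "qnull (Gop Es M1 K \<sigma>) \<subseteq> qnull (Fk Es M1 k (Gop Es M1 K \<sigma>))"
proof -
  let ?F = "Fsum Es M1 K"
  have "?F (Gop Es M1 K \<sigma>) = (\<Sum>i<CARD('n). (?F ^^ Suc i) \<sigma>)"
    unfolding Gop_Fsum by (simp add: cp_sum_apply[OF cp_Fsum])
  then have "qnull (?F (Gop Es M1 K \<sigma>)) = (\<Inter>i<CARD('n). qnull ((?F ^^ Suc i) \<sigma>))"
    by (simp del: funpow.simps) (rule qnull_sum, auto simp: psd_pow cp_Fsum \<sigma> simp del: funpow.simps)
  also have "qnull (Gop Es M1 K \<sigma>) \<subseteq> \<dots>"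
    using qnull_orbit_sum[OF cp_Fsum \<sigma>] unfolding Gop_Fsum by blast
  finally have "qnull (Gop Es M1 K \<sigma>) \<subseteq> qnull (?F (Gop Es M1 K \<sigma>))" .
  also have "\<dots> \<subseteq> qnull (Fk Es M1 k (Gop Es M1 K \<sigma>))"
    unfolding Fsum_def using K by (subst qnull_sum) (auto simp: cp_psd cp_Fk cp_Gop \<sigma>)
  finally show ?thesis .
qed

definition first_occ :: "nat list \<Rightarrow> nat list" where
  "first_occ w = rev (remdups (rev w))"

lemma set_first_occ [simp]: "set (first_occ w) = set w"
  by (simp add: first_occ_def)

lemma distinct_first_occ: "distinct (first_occ w)"
  by (simp add: first_occ_def)

lemma first_occ_Nil_iff [simp]: "first_occ w = [] \<longleftrightarrow> w = []"
  by (simp add: first_occ_def)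

lemma first_occ_snoc:
  "first_occ (w @ [x]) = (if x \<in> set w then first_occ w else first_occ w @ [x])"
  by (simp add: first_occ_def)

text \<open>Running a nonempty word w over K is dominated, in support, by running F' along the first
  occurrences of w followed by G: repeated processes are absorbed by G.\<close>
lemma qnull_word_Gop:
  fixes \<tau> :: "'n::finite op"
  assumes K: "finite K" and w: "w \<noteq> []" "set w \<subseteq> K" and \<tau>: "psd \<tau>"
  shows "qnull (Gop Es M1 K (Fprime Es M1 K (first_occ w) \<tau>)) \<subseteq> qnull (Fw Es M1 w \<tau>)"
  using w
proof (induction w rule: rev_induct)
  case (snoc x w)
  show ?case
  proof (cases "w = []")
    case True
    then show ?thesis using qnull_Gop_le[OF cp_psd[OF cp_Fk \<tau>]] by (simp add: first_occ_def)
  next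
    case False
    define P where "P = Fprime Es M1 K (first_occ w) \<tau>"
    have psd_P: "psd P" unfolding P_def by (rule cp_psd[OF cp_Fprime \<tau>])
    have "qnull (Gop Es M1 K P) \<subseteq> qnull (Fw Es M1 w \<tau>)"
      using snoc False unfolding P_def by auto
    then have step: "qnull (Fk Es M1 x (Gop Es M1 K P)) \<subseteq> qnull (Fw Es M1 (w @ [x]) \<tau>)"
      by (simp add: Fw_append cp_qnull_mono[OF cp_Fk cp_psd[OF cp_Gop psd_P] cp_psd[OF cp_Fw \<tau>]])
    show ?thesis
    proof (cases "x \<in> set w")
      case True
      have "x \<in> K" using snoc by auto
      then show ?thesis
        using qnull_Gop_absorbs_Fk[OF K _ psd_P] step True by (fastforce simp: first_occ_snoc P_def)
    next
      case False
      have "qnull (Gop Es M1 K (Fk Es M1 x (Gop Es M1 K P))) \<subseteq> qnull (Fk Es M1 x (Gop Es M1 K P))"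
        by (rule qnull_Gop_le[OF cp_psd[OF cp_Fk cp_psd[OF cp_Gop psd_P]]])
      then show ?thesis using step False \<open>w \<noteq> []\<close>
        by (simp add: first_occ_snoc Fprime_snoc P_def)
    qed
  qed
qed simp

lemma qnull_word_Fprime:
  fixes \<tau> :: "'n::finite op"
  assumes K: "finite K" and w: "set w \<subseteq> K" and x: "x \<notin> set w" and \<tau>: "psd \<tau>"
  shows "qnull (Fprime Es M1 K (first_occ (w @ [x])) \<tau>) \<subseteq> qnull (Fw Es M1 (w @ [x]) \<tau>)"
proof (cases "w = []")
  case True then show ?thesis by (simp add: first_occ_def)
next
  case False
  define P where "P = Fprime Es M1 K (first_occ w) \<tau>"
  have psd_P: "psd P" unfolding P_def by (rule cp_psd[OF cp_Fprime \<tau>])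
  have "qnull (Gop Es M1 K P) \<subseteq> qnull (Fw Es M1 w \<tau>)"
    using qnull_word_Gop[OF K False w \<tau>] unfolding P_def .
  then have "qnull (Fk Es M1 x (Gop Es M1 K P)) \<subseteq> qnull (Fk Es M1 x (Fw Es M1 w \<tau>))"
    by (rule cp_qnull_mono[OF cp_Fk cp_psd[OF cp_Gop psd_P] cp_psd[OF cp_Fw \<tau>]])
  then show ?thesis using False x
    by (simp add: first_occ_snoc Fw_append Fprime_snoc P_def)
qed

lemma finite_perms: "finite K \<Longrightarrow> finite (perms K)"
proof -
  assume K: "finite K"
  have "perms K \<subseteq> {xs. set xs \<subseteq> K \<and> length xs \<le> card K}"
    unfolding perms_def using distinct_card by fastforce
  then show ?thesis by (rule finite_subset) (rule finite_lists_length_le[OF K])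
qed

lemma qnull_SumFprime_le:
  "finite K \<Longrightarrow> p \<in> perms K \<Longrightarrow> psd \<tau> \<Longrightarrow> qnull (SumFprime Es M1 K \<tau>) \<subseteq> qnull (Fprime Es M1 K p \<tau>)"
  unfolding SumFprime_def by (subst qnull_sum) (auto simp: finite_perms cp_psd cp_Fprime)

lemma covering_prefix:
  fixes s :: "nat \<Rightarrow> nat"
  assumes K: "finite K" "K \<noteq> {}" and sK: "\<forall>n. s n \<in> K" and occ: "\<forall>k\<in>K. \<exists>n. s n = k"
  obtains n where "map s [0..<Suc n] = map s [0..<n] @ [s n]" "s n \<notin> set (map s [0..<n])"
    "set (map s [0..<Suc n]) = K"
proof -
  obtain g where g: "\<forall>k\<in>K. s (g k) = k" using occ by metis
  have covers: "K \<subseteq> s ` {..<Suc (Max (g ` K))}"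
  proof
    fix k assume k: "k \<in> K"
    then have "g k < Suc (Max (g ` K))" using K by (simp add: le_imp_less_Suc)
    then show "k \<in> s ` {..<Suc (Max (g ` K))}" using g k by force
  qed
  define N where "N = (LEAST N. K \<subseteq> s ` {..<N})"
  have N: "K \<subseteq> s ` {..<N}" unfolding N_def by (rule LeastI[of "\<lambda>N. K \<subseteq> s ` {..<N}", OF covers])
  then obtain n where n: "N = Suc n" using K by (cases N) auto
  have "\<not> K \<subseteq> s ` {..<n}"
    using Least_le[of "\<lambda>N. K \<subseteq> s ` {..<N}" n] n unfolding N_def by auto
  then obtain k where k: "k \<in> K" "k \<notin> s ` {..<n}" by blast
  with N n have "s n = k" by (auto simp: lessThan_Suc)
  with k have fresh: "s n \<notin> s ` {..<n}" by simp
  have img: "set (map s [0..<m]) = s ` {..<m}" for m by (simp add: atLeast0LessThan)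
  show thesis
  proof (rule that)
    show "s n \<notin> set (map s [0..<n])" using fresh unfolding img .
    show "set (map s [0..<Suc n]) = K" using N n sK unfolding img by blast
  qed simp
qed

lemma qnull_SumFprime_prefix:
  fixes s :: "nat \<Rightarrow> nat"
  assumes K: "finite K" "K \<noteq> {}" and sK: "\<forall>n. s n \<in> K" and occ: "\<forall>k\<in>K. \<exists>n. s n = k"
  obtains n where "n \<ge> 1"
    "\<And>\<tau>::'n::finite op. psd \<tau> \<Longrightarrow> qnull (SumFprime Es M1 K \<tau>) \<subseteq> qnull (Fpath Es M1 s n \<tau>)"
proof -
  obtain n where split: "map s [0..<Suc n] = map s [0..<n] @ [s n]"
    and fresh: "s n \<notin> set (map s [0..<n])" and covers: "set (map s [0..<Suc n]) = K"
    using covering_prefix[OF assms] .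
  have perm: "first_occ (map s [0..<Suc n]) \<in> perms K"
    unfolding perms_def using distinct_first_occ covers by simp
  show thesis
  proof (rule that[of "Suc n"])
    fix \<tau> :: "'n op" assume \<tau>: "psd \<tau>"
    have "qnull (SumFprime Es M1 K \<tau>) \<subseteq> qnull (Fprime Es M1 K (first_occ (map s [0..<Suc n])) \<tau>)"
      by (rule qnull_SumFprime_le[OF K(1) perm \<tau>])
    also have "\<dots> \<subseteq> qnull (Fpath Es M1 s (Suc n) \<tau>)"
      unfolding Fpath_Fw split using qnull_word_Fprime[OF K(1) _ fresh \<tau>] sK by auto
    finally show "qnull (SumFprime Es M1 K \<tau>) \<subseteq> qnull (Fpath Es M1 s (Suc n) \<tau>)" .
  qed simp
qed

lemma fair_paths_shift: "s \<in> fair_paths K \<Longrightarrow> (\<lambda>i. s (a + i)) \<in> fair_paths K"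
proof -
  assume s: "s \<in> fair_paths K"
  have "infinite {i. s (a + i) = k}" if k: "k \<in> K" for k
    unfolding infinite_nat_iff_unbounded_le
  proof
    fix m
    obtain n where "n \<ge> m + a" "s n = k"
      using s k unfolding fair_paths_def infinite_nat_iff_unbounded_le by blast
    then show "\<exists>i\<ge>m. i \<in> {i. s (a + i) = k}" by (intro exI[of _ "n - a"]) auto
  qed
  then show ?thesis using s unfolding fair_paths_def by auto
qed

lemma fair_paths_visit: "s \<in> fair_paths K \<Longrightarrow> \<forall>k\<in>K. \<exists>n. s n = k"
  unfolding fair_paths_def by (auto dest!: not_finite_existsD)

lemma qnull_SumFprime_pow_path:
  fixes \<sigma> :: "'n::finite op"
  assumes K: "finite K" "K \<noteq> {}"
  shows "s \<in> fair_paths K \<Longrightarrow> psd \<sigma> \<Longrightarrow>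
     \<exists>n\<ge>j. qnull ((SumFprime Es M1 K ^^ j) \<sigma>) \<subseteq> qnull (Fpath Es M1 s n \<sigma>)"
proof (induction j arbitrary: s \<sigma>)
  case 0 then show ?case by (intro exI[of _ 0]) simp
next
  case (Suc j)
  let ?E = "SumFprime Es M1 K"
  obtain n1 where n1: "n1 \<ge> 1"
    and first: "\<And>\<tau>::'n op. psd \<tau> \<Longrightarrow> qnull (?E \<tau>) \<subseteq> qnull (Fpath Es M1 s n1 \<tau>)"
    using qnull_SumFprime_prefix[OF K, of s] Suc.prems fair_paths_visit[OF Suc.prems(1)]
    unfolding fair_paths_def by blast
  define \<sigma>' where "\<sigma>' = Fpath Es M1 s n1 \<sigma>"
  have psd_\<sigma>': "psd \<sigma>'" unfolding \<sigma>'_def by (rule cp_psd[OF cp_Fpath Suc.prems(2)])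
  obtain n2 where n2: "n2 \<ge> j"
    "qnull ((?E ^^ j) \<sigma>') \<subseteq> qnull (Fpath Es M1 (\<lambda>i. s (n1 + i)) n2 \<sigma>')"
    using Suc.IH[OF fair_paths_shift[OF Suc.prems(1)] psd_\<sigma>'] by blast
  have "qnull ((?E ^^ Suc j) \<sigma>) = qnull ((?E ^^ j) (?E \<sigma>))"
    by (simp only: funpow_Suc_right o_apply)
  also have "\<dots> \<subseteq> qnull ((?E ^^ j) \<sigma>')"
    using first[OF Suc.prems(2)] unfolding \<sigma>'_def
    by (rule cp_qnull_mono[OF cp_pow[OF cp_SumFprime] cp_psd[OF cp_SumFprime Suc.prems(2)]
          cp_psd[OF cp_Fpath Suc.prems(2)]])
  also have "\<dots> \<subseteq> qnull (Fpath Es M1 s (n1 + n2) \<sigma>)"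
    using n2 by (simp add: Fpath_shift \<sigma>'_def)
  finally show ?case using n1 n2 by (intro exI[of _ "n1 + n2"]) auto
qed

theorem terminates_if_SumFprime_nilpotent:
  fixes \<rho>0 :: "'n::finite op"
  assumes K: "finite K" "K \<noteq> {}" and \<rho>0: "psd \<rho>0"
    and zero: "(SumFprime Es M1 K ^^ CARD('n)) \<rho>0 = 0"
  shows "terminates_in Es M1 \<rho>0 (fair_paths K)"
  unfolding terminates_in_def
proof
  fix s assume s: "s \<in> fair_paths K"
  obtain n where n: "n \<ge> CARD('n)"
    "qnull ((SumFprime Es M1 K ^^ CARD('n)) \<rho>0) \<subseteq> qnull (Fpath Es M1 s n \<rho>0)"
    using qnull_SumFprime_pow_path[OF K s \<rho>0] by blast
  then have "qnull (Fpath Es M1 s n \<rho>0) = UNIV" using zero by auto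
  then have "Fpath Es M1 s n \<rho>0 = 0" using qnull_UNIV_iff[OF cp_psd[OF cp_Fpath \<rho>0]] by blast
  moreover have "n \<ge> 1" using n(1) zero_less_card_finite[where 'a='n] by linarith
  ultimately show "\<exists>n\<ge>1. Fpath Es M1 s n \<rho>0 = 0" by blast
qed

section \<open>A fair non-terminating path when (\<Sum>p F'_p)^d does not annihilate the input\<close>

definition op_additive :: "('n::finite op \<Rightarrow> 'n op) \<Rightarrow> bool" where
  "op_additive h \<longleftrightarrow> (\<forall>X Y. h (X + Y) = h X + h Y)"

lemma op_additive_zero: "op_additive h \<Longrightarrow> h 0 = 0"
  unfolding op_additive_def by (metis add_cancel_right_right add_0)

lemma op_additive_sum: "op_additive h \<Longrightarrow> h (\<Sum>i\<in>S. g i) = (\<Sum>i\<in>S. h (g i))"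
  by (induction S rule: infinite_finite_induct) (auto simp: op_additive_zero op_additive_def)

lemma op_additive_cp: "cp f \<Longrightarrow> op_additive f"
  unfolding op_additive_def by (simp add: cp_add)

definition traced_by :: "(nat \<Rightarrow> 'n::finite op list) \<Rightarrow> 'n op \<Rightarrow> ('n op \<Rightarrow> 'n op) \<Rightarrow>
    (nat list \<Rightarrow> bool) \<Rightarrow> bool" where
  "traced_by Es M1 f P \<longleftrightarrow>
     (\<forall>h \<sigma>. op_additive h \<longrightarrow> h (f \<sigma>) \<noteq> 0 \<longrightarrow> (\<exists>w. P w \<and> h (Fw Es M1 w \<sigma>) \<noteq> 0))"

lemma traced_Fk: "traced_by Es M1 (Fk Es M1 x) (\<lambda>w. w = [x])"
  unfolding traced_by_def by auto

lemma traced_id: "traced_by Es M1 id (\<lambda>w. w = [])"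
  unfolding traced_by_def by auto

lemma traced_mono: "traced_by Es M1 f P \<Longrightarrow> (\<And>w. P w \<Longrightarrow> Q w) \<Longrightarrow> traced_by Es M1 f Q"
  unfolding traced_by_def by blast

lemma traced_sum:
  assumes "\<And>i. i \<in> S \<Longrightarrow> traced_by Es M1 (f i) P"
  shows "traced_by Es M1 (\<lambda>\<sigma>. \<Sum>i\<in>S. f i \<sigma>) P"
  unfolding traced_by_def
proof (intro allI impI)
  fix h \<sigma> assume h: "op_additive h" and nz: "h (\<Sum>i\<in>S. f i \<sigma>) \<noteq> 0"
  then obtain i where "i \<in> S" "h (f i \<sigma>) \<noteq> 0"
    by (metis (mono_tags, lifting) op_additive_sum sum.neutral)
  then show "\<exists>w. P w \<and> h (Fw Es M1 w \<sigma>) \<noteq> 0" using assms h unfolding traced_by_def by blast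
qed

text \<open>Traces of a composition are concatenations of traces; the second map is observed through
  the additive map h \<circ> F_w.\<close>
lemma traced_comp:
  assumes f: "traced_by Es M1 f P" and g: "traced_by Es M1 g Q"
  shows "traced_by Es M1 (f \<circ> g) (\<lambda>w. \<exists>u v. w = v @ u \<and> P u \<and> Q v)"
  unfolding traced_by_def
proof (intro allI impI)
  fix h \<sigma> assume h: "op_additive h" and nz: "h ((f \<circ> g) \<sigma>) \<noteq> 0"
  obtain u where u: "P u" "h (Fw Es M1 u (g \<sigma>)) \<noteq> 0"
    using f h nz unfolding traced_by_def by auto
  have h': "op_additive (h \<circ> Fw Es M1 u)"
    using h unfolding op_additive_def by (simp add: cp_add[OF cp_Fw])
  obtain v where v: "Q v" "h (Fw Es M1 u (Fw Es M1 v \<sigma>)) \<noteq> 0"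
    using g h' u(2) unfolding traced_by_def by (metis comp_apply)
  show "\<exists>w. (\<exists>u v. w = v @ u \<and> P u \<and> Q v) \<and> h (Fw Es M1 w \<sigma>) \<noteq> 0"
    using u v by (intro exI[of _ "v @ u"]) (auto simp: Fw_append)
qed

lemma traced_Fsum: "traced_by Es M1 (Fsum Es M1 K) (\<lambda>w. set w \<subseteq> K)"
  unfolding Fsum_def by (rule traced_sum, rule traced_mono[OF traced_Fk]) auto

lemma traced_Gop: "traced_by Es M1 (Gop Es M1 K) (\<lambda>w. set w \<subseteq> K)"
proof -
  have "traced_by Es M1 (Fsum Es M1 K ^^ n) (\<lambda>w. set w \<subseteq> K)" for n
  proof (induction n)
    case 0 show ?case by (simp only: funpow.simps) (rule traced_mono[OF traced_id], auto)
  next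
    case (Suc n)
    show ?case
      by (simp only: funpow.simps) (rule traced_mono[OF traced_comp[OF traced_Fsum Suc.IH]], auto)
  qed
  then show ?thesis unfolding Gop_Fsum by (rule traced_sum)
qed

lemma traced_Fprime:
  "p \<noteq> [] \<Longrightarrow> set p \<subseteq> K \<Longrightarrow>
   traced_by Es M1 (Fprime Es M1 K p) (\<lambda>w. set w \<subseteq> K \<and> set p \<subseteq> set w)"
proof (induction Es M1 K p rule: Fprime.induct)
  case (2 Es M1 K x)
  then show ?case by (auto intro: traced_mono[OF traced_Fk])
next
  case (3 Es M1 K x y r)
  have IH: "traced_by Es M1 (Fprime Es M1 K (y # r)) (\<lambda>w. set w \<subseteq> K \<and> set (y # r) \<subseteq> set w)"
    using 3 by auto
  have "traced_by Es M1 (Fprime Es M1 K (y # r) \<circ> (Gop Es M1 K \<circ> Fk Es M1 x))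
         (\<lambda>w. set w \<subseteq> K \<and> set (x # y # r) \<subseteq> set w)"
    by (rule traced_mono[OF traced_comp[OF IH traced_comp[OF traced_Gop traced_Fk]]]) (use 3 in auto)
  then show ?case by (simp only: Fprime.simps o_assoc)
qed simp

lemma traced_SumFprime:
  assumes K: "K \<noteq> {}"
  shows "traced_by Es M1 (SumFprime Es M1 K) (\<lambda>w. w \<noteq> [] \<and> set w = K)"
  unfolding SumFprime_def
proof (rule traced_sum)
  fix p assume p: "p \<in> perms K"
  then have "p \<noteq> []" "set p = K" using K by (auto simp: perms_def)
  then show "traced_by Es M1 (Fprime Es M1 K p) (\<lambda>w. w \<noteq> [] \<and> set w = K)"
    by (intro traced_mono[OF traced_Fprime]) auto
qed

definition block :: "(nat \<Rightarrow> 'n::finite op list) \<Rightarrow> 'n op \<Rightarrow> nat set \<Rightarrow> 'n op \<Rightarrow> nat list" where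
  "block Es M1 K \<sigma> = (SOME w. w \<noteq> [] \<and> set w = K \<and>
      (SumFprime Es M1 K ^^ CARD('n)) (Fw Es M1 w \<sigma>) \<noteq> 0)"

lemma block_exists:
  fixes \<sigma> :: "'n::finite op"
  assumes K: "K \<noteq> {}" and \<sigma>: "psd \<sigma>" and nz: "(SumFprime Es M1 K ^^ CARD('n)) \<sigma> \<noteq> 0"
  shows "block Es M1 K \<sigma> \<noteq> [] \<and> set (block Es M1 K \<sigma>) = K \<and>
         (SumFprime Es M1 K ^^ CARD('n)) (Fw Es M1 (block Es M1 K \<sigma>) \<sigma>) \<noteq> 0"
proof -
  let ?E = "SumFprime Es M1 K"
  have "(?E ^^ CARD('n)) (?E \<sigma>) \<noteq> 0"
  proof
    assume "(?E ^^ CARD('n)) (?E \<sigma>) = 0"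
    then have "(?E ^^ Suc (CARD('n))) \<sigma> = 0" by (simp only: funpow_Suc_right o_apply)
    then have "(?E ^^ CARD('n)) \<sigma> = 0" by (rule cp_pow_zero_within_dim[OF cp_SumFprime \<sigma>])
    with nz show False by simp
  qed
  then have "\<exists>w. w \<noteq> [] \<and> set w = K \<and> (?E ^^ CARD('n)) (Fw Es M1 w \<sigma>) \<noteq> 0"
    using traced_SumFprime[OF K, of Es M1] op_additive_cp[OF cp_pow[OF cp_SumFprime]]
    unfolding traced_by_def by blast
  then show ?thesis unfolding block_def by (rule someI_ex)
qed

definition sched_step :: "(nat \<Rightarrow> 'n::finite op list) \<Rightarrow> 'n op \<Rightarrow> nat set \<Rightarrow>
    'n op \<times> nat list \<Rightarrow> 'n op \<times> nat list" where
  "sched_step Es M1 K = (\<lambda>(\<sigma>, c).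
     (Fk Es M1 (hd c) \<sigma>, if tl c = [] then block Es M1 K (Fk Es M1 (hd c) \<sigma>) else tl c))"

definition sched :: "(nat \<Rightarrow> 'n::finite op list) \<Rightarrow> 'n op \<Rightarrow> nat set \<Rightarrow> 'n op \<Rightarrow> nat \<Rightarrow>
    'n op \<times> nat list" where
  "sched Es M1 K \<rho>0 n = (sched_step Es M1 K ^^ n) (\<rho>0, block Es M1 K \<rho>0)"

definition live :: "(nat \<Rightarrow> 'n::finite op list) \<Rightarrow> 'n op \<Rightarrow> nat set \<Rightarrow> 'n op \<times> nat list \<Rightarrow> bool" where
  "live Es M1 K = (\<lambda>(\<sigma>, c). psd \<sigma> \<and> c \<noteq> [] \<and> set c \<subseteq> K \<and>
     (SumFprime Es M1 K ^^ CARD('n)) (Fw Es M1 c \<sigma>) \<noteq> 0)"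

lemma live_sched_step:
  assumes K: "K \<noteq> {}" and live: "live Es M1 K (\<sigma>, c)"
  shows "live Es M1 K (sched_step Es M1 K (\<sigma>, c))"
proof -
  from live obtain x c' where c: "c = x # c'" unfolding live_def by (cases c) auto
  have \<sigma>': "psd (Fk Es M1 x \<sigma>)" using live by (simp add: live_def cp_psd[OF cp_Fk])
  show ?thesis
  proof (cases "c' = []")
    case True
    then show ?thesis using block_exists[OF K \<sigma>'] live c \<sigma>' by (simp add: live_def sched_step_def)
  next
    case False
    then show ?thesis using live c \<sigma>' by (auto simp: live_def sched_step_def)
  qed
qed

lemma live_nonzero: "live Es M1 K (\<sigma>, c) \<Longrightarrow> \<sigma> \<noteq> 0"
  for \<sigma> :: "'n::finite op"
proof
  assume "live Es M1 K (\<sigma>, c)" and "\<sigma> = 0"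
  moreover have "Fw Es M1 c 0 = 0" by (rule cp_zero[OF cp_Fw])
  moreover have "(SumFprime Es M1 K ^^ CARD('n)) 0 = 0"
    by (rule cp_zero[OF cp_pow[OF cp_SumFprime]])
  ultimately show False by (simp add: live_def)
qed

lemma sched_step_refill:
  fixes \<sigma> :: "'n::finite op"
  assumes K: "K \<noteq> {}" and live: "live Es M1 K (\<sigma>, c)" and last: "tl c = []"
  shows "set (snd (sched_step Es M1 K (\<sigma>, c))) = K"
proof -
  from live last obtain x where c: "c = [x]" unfolding live_def by (cases c) auto
  have \<sigma>': "psd (Fk Es M1 x \<sigma>)" using live by (simp add: live_def cp_psd[OF cp_Fk])
  show ?thesis using block_exists[OF K \<sigma>'] live c by (simp add: live_def sched_step_def)
qed

lemma live_sched:
  fixes \<rho>0 :: "'n::finite op"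
  assumes K: "K \<noteq> {}" and \<rho>0: "psd \<rho>0" and nz: "(SumFprime Es M1 K ^^ CARD('n)) \<rho>0 \<noteq> 0"
  shows "live Es M1 K (sched Es M1 K \<rho>0 n)"
proof (induction n)
  case 0 then show ?case using block_exists[OF K \<rho>0 nz] \<rho>0 by (simp add: live_def sched_def)
next
  case (Suc n)
  then show ?case
    using live_sched_step[OF K, of Es M1 "fst (sched Es M1 K \<rho>0 n)" "snd (sched Es M1 K \<rho>0 n)"]
    by (simp add: sched_def)
qed

lemma sched_Suc:
  "sched Es M1 K \<rho>0 (Suc n) = sched_step Es M1 K (sched Es M1 K \<rho>0 n)"
  by (simp add: sched_def)

lemma fst_sched:
  "fst (sched Es M1 K \<rho>0 n) = Fpath Es M1 (\<lambda>i. hd (snd (sched Es M1 K \<rho>0 i))) n \<rho>0"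
  by (induction n) (auto simp: sched_Suc sched_step_def split: prod.splits, simp add: sched_def)

lemma snd_sched_drop:
  "i < length (snd (sched Es M1 K \<rho>0 n)) \<Longrightarrow>
   snd (sched Es M1 K \<rho>0 (n + i)) = drop i (snd (sched Es M1 K \<rho>0 n))"
proof (induction i)
  case (Suc i)
  then have "snd (sched Es M1 K \<rho>0 (n + i)) = drop i (snd (sched Es M1 K \<rho>0 n))" by simp
  moreover have "drop (Suc i) (snd (sched Es M1 K \<rho>0 n)) \<noteq> []" using Suc.prems by simp
  ultimately show ?case
    by (simp add: sched_Suc sched_step_def split_beta tl_drop drop_Suc)
qed simp

lemma sched_refills:
  fixes \<rho>0 :: "'n::finite op"
  assumes K: "K \<noteq> {}" and \<rho>0: "psd \<rho>0" and nz: "(SumFprime Es M1 K ^^ CARD('n)) \<rho>0 \<noteq> 0"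
  shows "\<exists>n\<ge>N. set (snd (sched Es M1 K \<rho>0 n)) = K"
proof -
  let ?c = "sched Es M1 K \<rho>0"
  define j where "j = length (snd (?c N)) - 1"
  have live_N: "live Es M1 K (?c N)" by (rule live_sched[OF K \<rho>0 nz])
  then have j: "j < length (snd (?c N))" by (auto simp: j_def live_def split: prod.splits)
  then have "tl (snd (?c (N + j))) = tl (drop j (snd (?c N)))" by (simp add: snd_sched_drop)
  also have "\<dots> = []" by (simp add: tl_drop j_def)
  finally have last: "tl (snd (?c (N + j))) = []" .
  have "live Es M1 K (fst (?c (N + j)), snd (?c (N + j)))" using live_sched[OF K \<rho>0 nz] by simp
  from sched_step_refill[OF K this last] have "set (snd (?c (Suc (N + j)))) = K"
    by (simp add: sched_Suc)
  then show ?thesis by (intro exI[of _ "Suc (N + j)"]) simp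
qed

theorem not_terminates_if_SumFprime_not_nilpotent:
  fixes \<rho>0 :: "'n::finite op"
  assumes K: "K \<noteq> {}" and \<rho>0: "psd \<rho>0"
    and nz: "(SumFprime Es M1 K ^^ CARD('n)) \<rho>0 \<noteq> 0"
  shows "\<not> terminates_in Es M1 \<rho>0 (fair_paths K)"
proof -
  let ?c = "sched Es M1 K \<rho>0"
  define s where "s = (\<lambda>n. hd (snd (?c n)))"
  have live: "live Es M1 K (?c n)" for n by (rule live_sched[OF K \<rho>0 nz])
  have nonzero: "Fpath Es M1 s n \<rho>0 \<noteq> 0" for n
  proof
    assume "Fpath Es M1 s n \<rho>0 = 0"
    then have "fst (?c n) = 0" by (simp add: fst_sched s_def)
    then show False using live_nonzero live[of n] by (metis prod.collapse)
  qed
  have s_K: "s n \<in> K" for n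
    using live[of n] unfolding s_def live_def by (auto split: prod.splits)
  have "infinite {n. s n = k}" if k: "k \<in> K" for k
    unfolding infinite_nat_iff_unbounded_le
  proof
    fix N
    obtain n where n: "n \<ge> N" "set (snd (?c n)) = K" using sched_refills[OF K \<rho>0 nz] by blast
    then obtain i where i: "i < length (snd (?c n))" "snd (?c n) ! i = k"
      using k by (metis in_set_conv_nth)
    have "s (n + i) = k" using snd_sched_drop[OF i(1)] i by (simp add: s_def hd_drop_conv_nth)
    then show "\<exists>m\<ge>N. m \<in> {n. s n = k}" using n by (intro exI[of _ "n + i"]) auto
  qed
  then have "s \<in> fair_paths K" unfolding fair_paths_def using s_K by auto
  then show ?thesis unfolding terminates_in_def using nonzero by blast
qed

section \<open>The matrix representation\<close>

text \<open>Row-major vectorisation of an operator.\<close>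
definition vecm :: "'n::finite op \<Rightarrow> complex^('n \<times> 'n)" where
  "vecm X = (\<chi> ij. X $ fst ij $ snd ij)"

lemma vecm_eq_0: "vecm X = 0 \<longleftrightarrow> X = 0"
  by (auto simp: vecm_def vec_eq_iff)

lemma vecm_add: "vecm (X + Y) = vecm X + vecm Y"
  by (simp add: vecm_def vec_eq_iff)

lemma vecm_sum: "vecm (\<Sum>p\<in>S. f p) = (\<Sum>p\<in>S. vecm (f p))"
  by (induction S rule: infinite_finite_induct) (auto simp: vecm_add vecm_def vec_eq_iff)

lemma sum_pairs:
  "(\<Sum>kl\<in>(UNIV::('a::finite \<times> 'b::finite) set). f kl) = (\<Sum>k\<in>UNIV. \<Sum>l\<in>UNIV. f (k, l))"
  by (simp add: sum.cartesian_product UNIV_Times_UNIV[symmetric] del: UNIV_Times_UNIV)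

lemma kron_Phi:
  fixes X :: "'n::finite op"
  shows "kron X (mat 1) *v Phi = vecm X"
proof -
  have inner: "(\<Sum>l\<in>UNIV. X $ i $ k * (mat 1 :: 'n op) $ j $ l * (if k = l then 1 else 0))
      = (if k = j then X $ i $ j else 0)" for i j k
  proof -
    have "(\<Sum>l\<in>UNIV. X $ i $ k * (mat 1 :: 'n op) $ j $ l * (if k = l then 1 else 0))
        = (\<Sum>l\<in>UNIV. if l = k then X $ i $ k * (mat 1 :: 'n op) $ j $ k else 0)"
      by (rule sum.cong) auto
    then show ?thesis by (simp add: mat_def)
  qed
  have "(kron X (mat 1) *v Phi) $ (i, j) = X $ i $ j" for i j
    by (simp add: matrix_vector_mult_def kron_def Phi_def sum_pairs inner)
  then show ?thesis by (simp add: vec_eq_iff vecm_def)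
qed

lemma kron_vecm: "kron A (conj_mat A) *v vecm X = vecm (A ** X ** adj A)"
proof -
  have "(kron A (conj_mat A) *v vecm X) $ (i, j) = (A ** X ** adj A) $ i $ j" for i j
  proof -
    have "(kron A (conj_mat A) *v vecm X) $ (i, j)
        = (\<Sum>k\<in>UNIV. \<Sum>l\<in>UNIV. A $ i $ k * cnj (A $ j $ l) * X $ k $ l)"
      by (simp add: matrix_vector_mult_def kron_def vecm_def conj_mat_def sum_pairs)
    also have "\<dots> = (\<Sum>l\<in>UNIV. \<Sum>k\<in>UNIV. A $ i $ k * cnj (A $ j $ l) * X $ k $ l)"
      by (rule sum.swap)
    also have "\<dots> = (A ** X ** adj A) $ i $ j"
      by (simp add: matrix_matrix_mult_def adj_def sum_distrib_right sum_distrib_left mult_ac)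
    finally show ?thesis .
  qed
  then show ?thesis by (simp add: vec_eq_iff vecm_def)
qed

lemma matrep_vecm: "matrep L *v vecm X = vecm (apply_kraus L X)"
proof (induction L)
  case Nil then show ?case by (simp add: matrep_def apply_kraus_def vecm_def vec_eq_iff)
next
  case (Cons A L)
  then show ?case
    by (simp add: matrep_def apply_kraus_def matrix_vector_mult_add_rdistrib kron_vecm vecm_add)
qed

lemma sum_matrix_vector_mult: "(\<Sum>p\<in>S. A p) *v v = (\<Sum>p\<in>S. A p *v v)"
  by (induction S rule: infinite_finite_induct) (auto simp: matrix_vector_mult_add_rdistrib)

lemma Mrep_vecm: "Mrep Es M1 m *v vecm X = vecm (SumFprime Es M1 {1..m} X)"
proof -
  have "distinct [1..<m+1]" "set [1..<m+1] = {1..m}" by auto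
  then have "apply_kraus (kraus_Fprime Es M1 [1..<m+1] p) = Fprime Es M1 {1..m} p" for p
    by (metis apply_kraus_Fprime)
  then show ?thesis
    unfolding Mrep_def SumFprime_def sum_matrix_vector_mult matrep_vecm vecm_sum by (simp only:)
qed

lemma matpow_Mrep: "matpow (Mrep Es M1 m) n *v vecm X = vecm ((SumFprime Es M1 {1..m} ^^ n) X)"
  by (induction n) (simp_all add: matrix_vector_mul_assoc[symmetric] Mrep_vecm)

theorem mainTheorem8:
  fixes Es :: "nat \<Rightarrow> ('n::finite) op list"
    and M0 M1 :: "'n op"
    and \<rho>0 :: "'n op"
    and m :: nat
  assumes m_pos: "m \<ge> 1"
    and tp: "\<forall>k\<in>{1..m}. trace_preserving (Es k)"
    and meas: "adj M0 ** M0 + adj M1 ** M1 = mat 1"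
    and dens: "density_op \<rho>0"
  shows "(terminates_in Es M1 \<rho>0 (fair_paths {1..m}) \<longleftrightarrow>
            matpow (Mrep Es M1 m) CARD('n) *v (kron \<rho>0 (mat 1) *v Phi) = 0)
       \<and> (terminates_in Es M1 \<rho>0 (fair_paths {1..m}) \<longleftrightarrow>
            (SumFprime Es M1 {1..m} ^^ CARD('n)) \<rho>0 = 0)"
proof -
  have K: "finite {1..m}" "{1..m} \<noteq> {}" using m_pos by auto
  have \<rho>0: "psd \<rho>0" by (rule density_psd[OF dens])
  have criterion: "terminates_in Es M1 \<rho>0 (fair_paths {1..m}) \<longleftrightarrow>
      (SumFprime Es M1 {1..m} ^^ CARD('n)) \<rho>0 = 0"
    using terminates_if_SumFprime_nilpotent[OF K \<rho>0]
      not_terminates_if_SumFprime_not_nilpotent[OF K(2) \<rho>0] by blast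
  have "matpow (Mrep Es M1 m) CARD('n) *v (kron \<rho>0 (mat 1) *v Phi)
      = vecm ((SumFprime Es M1 {1..m} ^^ CARD('n)) \<rho>0)"
    by (simp add: kron_Phi matpow_Mrep)
  then show ?thesis using criterion vecm_eq_0 by metis
qed

end
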